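(* Fix a point and real numbers $L_F\neq0$, $L_{FF}$, $L_{FG}$, $L_{GG}$ (values at that point of derivatives of a Lagrangian $L(F,G)$), and an antisymmetric tensor $F_{\mu\nu}$ with invariants $F=F^{\mu\nu}F_{\mu\nu}$, $G=F^{\mu\nu}\tilde F_{\mu\nu}$. Let $f_{\mu\nu}$ be antisymmetric and $k_\lambda$ a covector satisfying (C) $f_{\mu\nu}k_\lambda+f_{\nu\lambda}k_\mu+f_{\lambda\mu}k_\nu=0$, and (E) $L_F f^{\mu\nu}k_\nu+A\,F^{\mu\nu}k_\nu+B\,\tilde F^{\mu\nu}k_\nu=0$, where $\xi=F^{\alpha\beta}f_{\alpha\beta}$, $\zeta=\tilde F^{\alpha\beta}f_{\alpha\beta}$, $A=2(\xi L_{FF}+\zeta L_{FG})$, $B=2(\xi L_{FG}+\zeta L_{GG})$. Suppose $\xi\neq0$ and set $\Omega=\zeta/\xi$. Then: (a) $g_\Omega^{\mu\nu}k_\mu k_\nu=0$, where $$g_\Omega^{\mu\nu}=L_F\eta^{\mu\nu}-4\Big[(L_{FF}+\Omega L_{FG})F^{\mu}{}_{\lambda}F^{\lambda\nu}+(L_{FG}+\Omega L_{GG})F^{\mu}{}_{\lambda}\tilde F^{\lambda\nu}\Big];$$ (b) if moreover $\eta^{\mu\nu}k_\mu k_\nu\neq0$, then $\Omega^2\Omega_1+\Omega\,\Omega_2+\Omega_3=0$, where $\Omega_1=-L_FL_{FG}+2FL_{FG}L_{GG}+G(L_{GG}^2-L_{FG}^2)$, $\Omega_2=(L_F+2GL_{FG})(L_{GG}-L_{FF})+2F(L_{FF}L_{GG}+L_{FG}^2)$,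 $\Omega_3=L_FL_{FG}+2FL_{FF}L_{FG}+G(L_{FG}^2-L_{FF}^2)$.
   Context: Minkowski metric $\eta_{\mu\nu}=\mathrm{diag}(1,-1,-1,-1)$, indices raised/lowered with $\eta$, summation convention. The dual is $\tilde F_{\alpha\beta}=\tfrac12\eta_{\alpha\beta}{}^{\mu\nu}F_{\mu\nu}$ with $\eta_{\alpha\beta\mu\nu}$ the totally antisymmetric Levi-Civita tensor; with these conventions $\tilde F_{\mu\nu}F^{\nu\lambda}=-\tfrac14G\,\delta_\mu^\lambda$ and $\tilde F_{\mu\lambda}\tilde F^{\lambda\nu}-F_{\mu\lambda}F^{\lambda\nu}=\tfrac12F\,\delta_\mu^\nu$. Conditions (C),(E) are the jump conditions for the field equations $\partial_\nu(L_FF^{\mu\nu}+L_G\tilde F^{\mu\nu})=0$ across a wavefront where $\partial_\lambda F_{\mu\nu}$ jumps by $f_{\mu\nu}k_\lambda$. *)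

theory Defs
  imports Complex_Main
begin

text \<open>Indices range over {0,1,2,3}
 (natural numbers below 4). A rank-2 tensor is a function nat => nat => real,
 a covector is nat => real; all tensors given as arguments carry LOWER indices.\<close>

definition eta :: "nat \<Rightarrow> nat \<Rightarrow> real" where
  "eta \<mu> \<nu> = (if \<mu> = \<nu> then (if \<mu> = 0 then 1 else -1) else 0)"

text \<open>Totally antisymmetric Levi-Civita tensor with lower indices, eps 0 1 2 3 = 1.\<close>
definition eps :: "nat \<Rightarrow> nat \<Rightarrow> nat \<Rightarrow> nat \<Rightarrow> real" where
  "eps a b c d = (if a < 4 \<and> b < 4 \<and> c < 4 \<and> d < 4 then
     of_int (sgn ((int b - int a) * (int c - int a) * (int d - int a)
                  * (int c - int b) * (int d - int b) * (int d - int c))) else 0)"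

definition raise2 :: "(nat \<Rightarrow> nat \<Rightarrow> real) \<Rightarrow> nat \<Rightarrow> nat \<Rightarrow> real" where
  "raise2 T \<mu> \<nu> = (\<Sum>\<alpha><4. \<Sum>\<beta><4. eta \<mu> \<alpha> * eta \<nu> \<beta> * T \<alpha> \<beta>)"

definition raise1 :: "(nat \<Rightarrow> nat \<Rightarrow> real) \<Rightarrow> nat \<Rightarrow> nat \<Rightarrow> real" where
  "raise1 T \<mu> \<nu> = (\<Sum>\<alpha><4. eta \<mu> \<alpha> * T \<alpha> \<nu>)"

definition dual :: "(nat \<Rightarrow> nat \<Rightarrow> real) \<Rightarrow> nat \<Rightarrow> nat \<Rightarrow> real" where
  "dual F a b = 1/2 * (\<Sum>\<mu><4. \<Sum>\<nu><4. eps a b \<mu> \<nu> * raise2 F \<mu> \<nu>)"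

definition contr :: "(nat \<Rightarrow> nat \<Rightarrow> real) \<Rightarrow> (nat \<Rightarrow> nat \<Rightarrow> real) \<Rightarrow> real" where
  "contr T S = (\<Sum>\<alpha><4. \<Sum>\<beta><4. raise2 T \<alpha> \<beta> * S \<alpha> \<beta>)"

definition antisym2 :: "(nat \<Rightarrow> nat \<Rightarrow> real) \<Rightarrow> bool" where
  "antisym2 T \<longleftrightarrow> (\<forall>\<mu><4. \<forall>\<nu><4. T \<mu> \<nu> = - T \<nu> \<mu>)"

definition invF :: "(nat \<Rightarrow> nat \<Rightarrow> real) \<Rightarrow> real" where
  "invF F = contr F F"

definition invG :: "(nat \<Rightarrow> nat \<Rightarrow> real) \<Rightarrow> real" where
  "invG F = contr F (dual F)"

definition gOmega :: "real \<Rightarrow> real \<Rightarrow> real \<Rightarrow> real \<Rightarrow> (nat \<Rightarrow> nat \<Rightarrow> real) \<Rightarrow> real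
    \<Rightarrow> nat \<Rightarrow> nat \<Rightarrow> real" where
  "gOmega LF LFF LFG LGG F \<Omega> \<mu> \<nu> =
     LF * eta \<mu> \<nu> - 4 * ((LFF + \<Omega> * LFG) * (\<Sum>l<4. raise1 F \<mu> l * raise2 F l \<nu>)
                       + (LFG + \<Omega> * LGG) * (\<Sum>l<4. raise1 F \<mu> l * raise2 (dual F) l \<nu>))"

definition quad :: "(nat \<Rightarrow> nat \<Rightarrow> real) \<Rightarrow> (nat \<Rightarrow> real) \<Rightarrow> real" where
  "quad Q k = (\<Sum>\<mu><4. \<Sum>\<nu><4. Q \<mu> \<nu> * k \<mu> * k \<nu>)"

end

theory Submission
  imports Defs
begin

text \<open>Write v = F^{mu nu} k_nu and w = Ft^{mu nu} k_nu, with Ft the dual of F.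
  Contracting the jump condition (E) with v and with w gives two scalar equations.
  In them v.w = G k^2/4 and w.w = v.v - F k^2/2 by the duality identities, while
  contracting (C) with F^{mu nu} k^lambda (resp. its dual) gives v.(f k) = xi k^2/2
  (resp. w.(f k) = zeta k^2/2). With zeta = Omega xi the first equation is xi/2 times
  g_Omega(k,k), which is (a); eliminating v.v between the two equations leaves k^2 times
  the quadratic in Omega, which is (b).\<close>

lemma sum_lessThan_4: "(\<Sum>i<(4::nat). g i) = g 0 + g 1 + g 2 + g 3"
  by (simp add: eval_nat_numeral)

lemma all_lessThan_4: "(\<forall>i<(4::nat). P i) \<longleftrightarrow> P 0 \<and> P 1 \<and> P 2 \<and> P 3"
  by (auto simp add: eval_nat_numeral less_Suc_eq)

text \<open>Index lemmas are stated in simp normal form, where \<open>1::nat\<close> appears as \<open>Suc 0\<close>.\<close>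

lemma antisym2_entries:
  assumes "antisym2 F"
  shows "F 0 0 = 0" "F (Suc 0) (Suc 0) = 0" "F 2 2 = 0" "F 3 3 = 0"
    "F (Suc 0) 0 = - F 0 (Suc 0)" "F 2 0 = - F 0 2" "F 3 0 = - F 0 3"
    "F 2 (Suc 0) = - F (Suc 0) 2" "F 3 (Suc 0) = - F (Suc 0) 3" "F 3 2 = - F 2 3"
proof -
  have "F a b = - F b a" if "a < 4" "b < 4" for a b
    using assms that unfolding antisym2_def by blast
  from this[of 0 0] this[of 1 1] this[of 2 2] this[of 3 3] this[of 1 0] this[of 2 0]
    this[of 3 0] this[of 2 1] this[of 3 1] this[of 3 2]
  show "F 0 0 = 0" "F (Suc 0) (Suc 0) = 0" "F 2 2 = 0" "F 3 3 = 0"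
    "F (Suc 0) 0 = - F 0 (Suc 0)" "F 2 0 = - F 0 2" "F 3 0 = - F 0 3"
    "F 2 (Suc 0) = - F (Suc 0) 2" "F 3 (Suc 0) = - F (Suc 0) 3" "F 3 2 = - F 2 3"
    by simp_all
qed

lemma dual_entries:
  assumes "antisym2 F"
  shows "dual F 0 (Suc 0) = F 2 3" "dual F 0 2 = - F (Suc 0) 3" "dual F 0 3 = F (Suc 0) 2"
    "dual F (Suc 0) 2 = - F 0 3" "dual F (Suc 0) 3 = F 0 2" "dual F 2 3 = - F 0 (Suc 0)"
  using assms unfolding dual_def raise2_def sum_lessThan_4
  by (simp_all add: eta_def eps_def antisym2_entries)

lemma dual_antisym2: "antisym2 F \<Longrightarrow> antisym2 (dual F)"
  unfolding antisym2_def[of "dual F"] all_lessThan_4 dual_def raise2_def sum_lessThan_4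
  by (simp add: eta_def eps_def antisym2_entries)

definition contr_vec :: "(nat \<Rightarrow> nat \<Rightarrow> real) \<Rightarrow> (nat \<Rightarrow> real) \<Rightarrow> nat \<Rightarrow> real" where
  "contr_vec T k \<mu> = (\<Sum>\<nu><4. raise2 T \<mu> \<nu> * k \<nu>)"

definition mdot :: "(nat \<Rightarrow> real) \<Rightarrow> (nat \<Rightarrow> real) \<Rightarrow> real" where
  "mdot u w = (\<Sum>\<mu><4. eta \<mu> \<mu> * u \<mu> * w \<mu>)"

lemma mdot_commute: "mdot u w = mdot w u"
  unfolding mdot_def by (simp add: ac_simps)

lemma mdot_contr_vec_dual:
  assumes "antisym2 F"
  shows "mdot (contr_vec F k) (contr_vec (dual F) k) = invG F / 4 * quad eta k"
  using assms antisym2_entries[OF dual_antisym2[OF assms]]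
  unfolding invG_def contr_def quad_def raise2_def sum_lessThan_4 contr_vec_def mdot_def
  by (simp add: eta_def dual_entries antisym2_entries field_simps)

lemma mdot_dual_dual:
  assumes "antisym2 F"
  shows "mdot (contr_vec (dual F) k) (contr_vec (dual F) k)
    = mdot (contr_vec F k) (contr_vec F k) - invF F / 2 * quad eta k"
  using assms antisym2_entries[OF dual_antisym2[OF assms]]
  unfolding invF_def contr_def quad_def raise2_def sum_lessThan_4 contr_vec_def mdot_def
  by (simp add: eta_def dual_entries antisym2_entries field_simps)

lemma quad_F_F:
  assumes "antisym2 F"
  shows "quad (\<lambda>\<mu> \<nu>. \<Sum>l<4. raise1 F \<mu> l * raise2 F l \<nu>) k = - mdot (contr_vec F k) (contr_vec F k)"
  using assms unfolding quad_def raise1_def raise2_def sum_lessThan_4 contr_vec_def mdot_def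
  by (simp add: eta_def antisym2_entries field_simps)

lemma quad_F_dual:
  assumes "antisym2 F"
  shows "quad (\<lambda>\<mu> \<nu>. \<Sum>l<4. raise1 F \<mu> l * raise2 (dual F) l \<nu>) k = - invG F / 4 * quad eta k"
  using assms antisym2_entries[OF dual_antisym2[OF assms]]
  unfolding invG_def contr_def quad_def raise1_def raise2_def sum_lessThan_4
  by (simp add: eta_def dual_entries antisym2_entries field_simps)

lemma quad_gOmega:
  assumes "antisym2 F"
  shows "quad (gOmega LF LFF LFG LGG F \<Omega>) k = LF * quad eta k
    + 4 * (LFF + \<Omega> * LFG) * mdot (contr_vec F k) (contr_vec F k)
    + (LFG + \<Omega> * LGG) * invG F * quad eta k"
proof -
  have "quad (gOmega LF LFF LFG LGG F \<Omega>) k = LF * quad eta k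
    - 4 * ((LFF + \<Omega> * LFG) * quad (\<lambda>\<mu> \<nu>. \<Sum>l<4. raise1 F \<mu> l * raise2 F l \<nu>) k
         + (LFG + \<Omega> * LGG) * quad (\<lambda>\<mu> \<nu>. \<Sum>l<4. raise1 F \<mu> l * raise2 (dual F) l \<nu>) k)"
    unfolding gOmega_def quad_def sum_lessThan_4 by (simp add: algebra_simps)
  then show ?thesis
    unfolding quad_F_F[OF assms] quad_F_dual[OF assms] by (simp add: algebra_simps)
qed

lemma mdot_contr_vec_cyclic:
  assumes "antisym2 F" "antisym2 f"
    and cyclic: "\<forall>\<mu><4. \<forall>\<nu><4. \<forall>l<4. f \<mu> \<nu> * k l + f \<nu> l * k \<mu> + f l \<mu> * k \<nu> = 0"
  shows "mdot (contr_vec F k) (contr_vec f k) = contr F f * quad eta k / 2"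
proof -
  have "contr F f * quad eta k - 2 * mdot (contr_vec F k) (contr_vec f k)
    = (\<Sum>\<mu><4. \<Sum>\<nu><4. \<Sum>l<4. raise2 F \<mu> \<nu> * (eta l l * k l)
         * (f \<mu> \<nu> * k l + f \<nu> l * k \<mu> + f l \<mu> * k \<nu>))"
    unfolding contr_def quad_def raise2_def sum_lessThan_4 contr_vec_def mdot_def
    by (simp add: eta_def antisym2_entries assms field_simps)
  also have "\<dots> = 0"
    using cyclic by simp
  finally show ?thesis by simp
qed

lemma mdot_linear_combination:
  assumes "\<forall>\<mu><4. c1 * u1 \<mu> + c2 * u2 \<mu> + c3 * u3 \<mu> = 0"
  shows "c1 * mdot w u1 + c2 * mdot w u2 + c3 * mdot w u3 = 0"
proof -
  have "c1 * mdot w u1 + c2 * mdot w u2 + c3 * mdot w u3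
    = (\<Sum>\<mu><4. eta \<mu> \<mu> * w \<mu> * (c1 * u1 \<mu> + c2 * u2 \<mu> + c3 * u3 \<mu>))"
    unfolding mdot_def sum_lessThan_4 by (simp add: algebra_simps)
  also have "\<dots> = 0"
    using assms by simp
  finally show ?thesis .
qed

lemma jump_conditions_contracted:
  assumes F: "antisym2 F" and f: "antisym2 f"
    and C: "\<forall>\<mu><4. \<forall>\<nu><4. \<forall>l<4. f \<mu> \<nu> * k l + f \<nu> l * k \<mu> + f l \<mu> * k \<nu> = 0"
    and E: "\<forall>\<mu><4. LF * (\<Sum>\<nu><4. raise2 f \<mu> \<nu> * k \<nu>) + A * (\<Sum>\<nu><4. raise2 F \<mu> \<nu> * k \<nu>)
                    + B * (\<Sum>\<nu><4. raise2 (dual F) \<mu> \<nu> * k \<nu>) = 0"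
  shows "LF * (contr F f * quad eta k / 2) + A * mdot (contr_vec F k) (contr_vec F k)
      + B * (invG F / 4 * quad eta k) = 0"
    and "LF * (contr (dual F) f * quad eta k / 2) + A * (invG F / 4 * quad eta k)
      + B * (mdot (contr_vec F k) (contr_vec F k) - invF F / 2 * quad eta k) = 0"
proof -
  have Ev: "\<forall>\<mu><4. LF * contr_vec f k \<mu> + A * contr_vec F k \<mu> + B * contr_vec (dual F) k \<mu> = 0"
    using E unfolding contr_vec_def .
  show "LF * (contr F f * quad eta k / 2) + A * mdot (contr_vec F k) (contr_vec F k)
      + B * (invG F / 4 * quad eta k) = 0"
    using mdot_linear_combination[OF Ev, of "contr_vec F k"]
    by (simp add: mdot_contr_vec_cyclic[OF F f C] mdot_contr_vec_dual[OF F])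
  show "LF * (contr (dual F) f * quad eta k / 2) + A * (invG F / 4 * quad eta k)
      + B * (mdot (contr_vec F k) (contr_vec F k) - invF F / 2 * quad eta k) = 0"
    using mdot_linear_combination[OF Ev, of "contr_vec (dual F) k"]
    by (simp add: mdot_contr_vec_cyclic[OF dual_antisym2[OF F] f C] mdot_dual_dual[OF F]
        mdot_contr_vec_dual[OF F] mdot_commute[of "contr_vec f k"]
        mdot_commute[of "contr_vec (dual F) k" "contr_vec F k"])
qed

lemma optical_dispersion_elimination:
  fixes LF LFF LFG LGG \<xi> \<Omega> q X G FF :: real
  assumes "\<xi> \<noteq> 0"
    and e1: "LF * (\<xi> * q / 2) + 2 * (\<xi> * LFF + \<Omega> * \<xi> * LFG) * X
      + 2 * (\<xi> * LFG + \<Omega> * \<xi> * LGG) * (G / 4 * q) = 0"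
    and e2: "LF * (\<Omega> * \<xi> * q / 2) + 2 * (\<xi> * LFF + \<Omega> * \<xi> * LFG) * (G / 4 * q)
      + 2 * (\<xi> * LFG + \<Omega> * \<xi> * LGG) * (X - FF / 2 * q) = 0"
  shows "LF * q + 4 * (LFF + \<Omega> * LFG) * X + (LFG + \<Omega> * LGG) * G * q = 0"
    and "q * (\<Omega>^2 * (- LF * LFG + 2 * FF * LFG * LGG + G * (LGG^2 - LFG^2))
          + \<Omega> * ((LF + 2 * G * LFG) * (LGG - LFF) + 2 * FF * (LFF * LGG + LFG^2))
          + (LF * LFG + 2 * FF * LFF * LFG + G * (LFG^2 - LFF^2))) = 0"
      (is "q * ?dispersion = 0")
proof -
  define a where "a = 2 * (LFF + \<Omega> * LFG)"
  define b where "b = 2 * (LFG + \<Omega> * LGG)"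
  have "\<xi> * (LF * q / 2 + a * X + b * (G / 4 * q)) = 0"
    using e1 unfolding a_def b_def by (simp add: algebra_simps)
  then have E1: "LF * q / 2 + a * X + b * (G / 4 * q) = 0"
    using \<open>\<xi> \<noteq> 0\<close> by simp
  have "\<xi> * (LF * \<Omega> * q / 2 + a * (G / 4 * q) + b * (X - FF / 2 * q)) = 0"
    using e2 unfolding a_def b_def by (simp add: algebra_simps)
  then have E2: "LF * \<Omega> * q / 2 + a * (G / 4 * q) + b * (X - FF / 2 * q) = 0"
    using \<open>\<xi> \<noteq> 0\<close> by simp
  show "LF * q + 4 * (LFF + \<Omega> * LFG) * X + (LFG + \<Omega> * LGG) * G * q = 0"
    using E1 unfolding a_def b_def by (simp add: algebra_simps)
  have "q * ?dispersion = b * (LF * q / 2 + a * X + b * (G / 4 * q))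
      - a * (LF * \<Omega> * q / 2 + a * (G / 4 * q) + b * (X - FF / 2 * q))"
    unfolding a_def b_def by (simp add: algebra_simps power2_eq_square)
  then show "q * ?dispersion = 0"
    using E1 E2 by simp
qed

theorem mainTheorem3:
  fixes LF LFF LFG LGG :: real
    and F f :: "nat \<Rightarrow> nat \<Rightarrow> real"
    and k :: "nat \<Rightarrow> real"
  defines "\<xi> \<equiv> contr F f"
    and "\<zeta> \<equiv> contr (dual F) f"
  defines "A \<equiv> 2 * (\<xi> * LFF + \<zeta> * LFG)"
    and "B \<equiv> 2 * (\<xi> * LFG + \<zeta> * LGG)"
  defines "\<Omega> \<equiv> \<zeta> / \<xi>"
  assumes LF_nz: "LF \<noteq> 0"
    and F_anti: "antisym2 F"
    and f_anti: "antisym2 f"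
    and C: "\<forall>\<mu><4. \<forall>\<nu><4. \<forall>l<4. f \<mu> \<nu> * k l + f \<nu> l * k \<mu> + f l \<mu> * k \<nu> = 0"
    and E: "\<forall>\<mu><4. LF * (\<Sum>\<nu><4. raise2 f \<mu> \<nu> * k \<nu>) + A * (\<Sum>\<nu><4. raise2 F \<mu> \<nu> * k \<nu>)
                    + B * (\<Sum>\<nu><4. raise2 (dual F) \<mu> \<nu> * k \<nu>) = 0"
    and xi_nz: "\<xi> \<noteq> 0"
  shows "quad (gOmega LF LFF LFG LGG F \<Omega>) k = 0
     \<and> (quad eta k \<noteq> 0 \<longrightarrow>
          (let G = invG F; FF = invF F;
               \<Omega>1 = - LF * LFG + 2 * FF * LFG * LGG + G * (LGG^2 - LFG^2);
               \<Omega>2 = (LF + 2 * G * LFG) * (LGG - LFF) + 2 * FF * (LFF * LGG + LFG^2);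
               \<Omega>3 = LF * LFG + 2 * FF * LFF * LFG + G * (LFG^2 - LFF^2)
           in \<Omega>^2 * \<Omega>1 + \<Omega> * \<Omega>2 + \<Omega>3 = 0))"
proof -
  have \<zeta>_eq: "\<zeta> = \<Omega> * \<xi>"
    using xi_nz unfolding \<Omega>_def by simp
  note dispersion = optical_dispersion_elimination[OF xi_nz
      jump_conditions_contracted[OF F_anti f_anti C E, folded \<xi>_def \<zeta>_def,
        unfolded A_def B_def \<zeta>_eq]]
  show ?thesis
    using dispersion unfolding quad_gOmega[OF F_anti] Let_def mult_eq_0_iff by blast
qed

end
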